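(* Let $\pi,\pi'$ be patterns of length $k$ with $\pi(1)=\pi'(1)$ that are super-strongly c-forest-Wilf equivalent. If it is not the case that $k$ is odd and $\pi(1)=\frac{k+1}{2}$, then $\pi=\pi'$. If $k$ is odd and $\pi(1)=\frac{k+1}{2}$, then for every $i\in[k]$, $\pi(i)=\pi'(i)$ or $\pi(i)+\pi'(i)=k+1$.
   Context: A pattern of length $k$ is a permutation of $[k]$. Rooted forests are unordered with a distinguished root in each component. A consecutive instance of $\pi$ in a labeled rooted forest is a downward path of $k$ vertices $v_1,\dots,v_k$ ($v_i$ the parent of $v_{i+1}$) whose labels are in the same relative order as $\pi$. Patterns $\pi,\pi'$ of length $k$ are super-strongly c-forest-Wilf equivalent if for every unlabeled rooted forest $F$ on $n$ vertices and every set $S$ of downward paths of $k$ vertices in $F$, the number of labelings of $F$ with distinct labels from $[n]$ for which $S$ is exactly the set of consecutive instances of $\pi$ equals the corresponding number for $\pi'$. *)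

theory Defs
  imports Main "HOL-Library.FuncSet"
begin

definition pattern :: "nat \<Rightarrow> (nat \<Rightarrow> nat) \<Rightarrow> bool" where
  "pattern k \<pi> \<longleftrightarrow> bij_betw \<pi> {1..k} {1..k}"

text \<open>An (unlabeled) rooted forest on the vertex set {0..<n}, given by a parent map:
  roots have parent None; the parent relation is acyclic.\<close>
definition rooted_forest :: "nat \<Rightarrow> (nat \<Rightarrow> nat option) \<Rightarrow> bool" where
  "rooted_forest n par \<longleftrightarrow>
     (\<forall>v<n. \<forall>u. par v = Some u \<longrightarrow> u < n) \<and>
     acyclic {(u, v). v < n \<and> par v = Some u}"

definition down_paths :: "nat \<Rightarrow> (nat \<Rightarrow> nat option) \<Rightarrow> nat \<Rightarrow> nat list set" where
  "down_paths n par k = {p. length p = k \<and> set p \<subseteq> {0..<n} \<and>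
      (\<forall>i. Suc i < k \<longrightarrow> par (p ! Suc i) = Some (p ! i))}"

definition labelings :: "nat \<Rightarrow> (nat \<Rightarrow> nat) set" where
  "labelings n = {L \<in> {0..<n} \<rightarrow>\<^sub>E {1..n}. bij_betw L {0..<n} {1..n}}"

definition is_instance :: "nat \<Rightarrow> (nat \<Rightarrow> nat) \<Rightarrow> (nat \<Rightarrow> nat) \<Rightarrow> nat list \<Rightarrow> bool" where
  "is_instance k \<pi> L p \<longleftrightarrow>
     (\<forall>i<k. \<forall>j<k. L (p ! i) < L (p ! j) \<longleftrightarrow> \<pi> (Suc i) < \<pi> (Suc j))"

definition instances :: "nat \<Rightarrow> (nat \<Rightarrow> nat option) \<Rightarrow> nat \<Rightarrow> (nat \<Rightarrow> nat) \<Rightarrow> (nat \<Rightarrow> nat) \<Rightarrow> nat list set" where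
  "instances n par k \<pi> L = {p \<in> down_paths n par k. is_instance k \<pi> L p}"

definition super_strongly_cfw_equiv :: "nat \<Rightarrow> (nat \<Rightarrow> nat) \<Rightarrow> (nat \<Rightarrow> nat) \<Rightarrow> bool" where
  "super_strongly_cfw_equiv k \<pi> \<pi>' \<longleftrightarrow>
     (\<forall>n par S. rooted_forest n par \<and> S \<subseteq> down_paths n par k \<longrightarrow>
        card {L \<in> labelings n. instances n par k \<pi> L = S}
        = card {L \<in> labelings n. instances n par k \<pi>' L = S})"

end

(*
  Fix i and hang m copies of a path on k - 1 vertices below the i-th vertex x of a path on k
  vertices; completed by x, each copy is a downward path of k vertices starting at x.  All m + 1
  paths are consecutive instances of pi exactly when, on each of them, the vertices that pi puts
  below (above) x carry smaller (larger) labels than x, in the relative order prescribed by pi.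
  These chains interleave freely, so such labelings number
    E(m) * C(m c + a, a) * C(m d + k - 1 - a, k - 1 - a),
  where c = pi(1) - 1, d = k - pi(1), a = pi(i) - 1 and E(m) depends only on pi(1).
  Counting labelings whose set of instances contains a given set is a sum of counts with an exact
  set of instances, so super-strong equivalence gives the same number for pi'.  For all m the two
  binomial products therefore agree; as polynomials in m they have the same roots -t/c and -t/d,
  and comparing the extreme roots gives pi(i) = pi'(i) unless c = d and pi(i) + pi'(i) = k + 1.
*)

theory Submission
  imports Defs "HOL-Library.Infinite_Set" "HOL-Computational_Algebra.Polynomial"
begin

section \<open>Labelings of finite sets\<close>

definition labelings_on :: "'v set \<Rightarrow> ('v \<Rightarrow> nat) set" where
  "labelings_on V = {L \<in> V \<rightarrow>\<^sub>E {1..card V}. bij_betw L V {1..card V}}"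

definition same_order :: "'v set \<Rightarrow> ('v \<Rightarrow> nat) \<Rightarrow> ('v \<Rightarrow> nat) \<Rightarrow> bool" where
  "same_order A L \<rho> \<longleftrightarrow> (\<forall>u\<in>A. \<forall>v\<in>A. L u < L v \<longleftrightarrow> \<rho> u < \<rho> v)"

definition order_invariant :: "'v set \<Rightarrow> (('v \<Rightarrow> nat) \<Rightarrow> bool) \<Rightarrow> bool" where
  "order_invariant A \<Phi> \<longleftrightarrow> (\<forall>L L'. same_order A L L' \<longrightarrow> \<Phi> L = \<Phi> L')"

definition reduce :: "'v set \<Rightarrow> ('v \<Rightarrow> nat) \<Rightarrow> 'v \<Rightarrow> nat" where
  "reduce A L = (\<lambda>v\<in>A. card {u \<in> A. L u \<le> L v})"

lemma labelings_eq_labelings_on: "labelings n = labelings_on {0..<n}"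
  unfolding labelings_def labelings_on_def by simp

lemma finite_labelings_on: "finite V \<Longrightarrow> finite (labelings_on V)"
  unfolding labelings_on_def by (rule finite_subset[of _ "V \<rightarrow>\<^sub>E {1..card V}"]) (auto intro: finite_PiE)

lemma labelings_onI:
  assumes "finite V" "inj_on L V" "L ` V \<subseteq> {1..card V}" "L \<in> extensional V"
  shows "L \<in> labelings_on V"
proof -
  have "card (L ` V) = card {1..card V}"
    using assms(2) by (simp add: card_image)
  then have "L ` V = {1..card V}"
    using assms(3) by (intro card_subset_eq) auto
  then show ?thesis
    using assms unfolding labelings_on_def bij_betw_def by (auto simp: PiE_iff)
qed

lemma labelings_onD:
  assumes "L \<in> labelings_on V"
  shows "inj_on L V" "L ` V = {1..card V}" "L \<in> extensional V"
  using assms unfolding labelings_on_def bij_betw_def by (auto simp: PiE_def)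

lemma labelings_on_singleton: "labelings_on {x} = {\<lambda>v. if v = x then 1 else undefined}"
  unfolding labelings_on_def by (auto simp: bij_betw_def PiE_iff extensional_def)

lemma same_order_sym: "same_order A L L' \<Longrightarrow> same_order A L' L"
  unfolding same_order_def by simp

lemma same_order_trans: "same_order A L L' \<Longrightarrow> same_order A L' L'' \<Longrightarrow> same_order A L L''"
  unfolding same_order_def by simp

lemma same_order_subset: "same_order A L L' \<Longrightarrow> B \<subseteq> A \<Longrightarrow> same_order B L L'"
  unfolding same_order_def by blast

lemma same_order_le_iff:
  "same_order A L L' \<Longrightarrow> u \<in> A \<Longrightarrow> v \<in> A \<Longrightarrow> L u \<le> L v \<longleftrightarrow> L' u \<le> L' v"
  unfolding same_order_def by (meson not_less)

lemma order_invariantD: "order_invariant A \<Phi> \<Longrightarrow> same_order A L L' \<Longrightarrow> \<Phi> L = \<Phi> L'"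
  unfolding order_invariant_def by blast

lemma reduce_cong: "same_order A L L' \<Longrightarrow> reduce A L = reduce A L'"
  unfolding reduce_def by (intro restrict_ext arg_cong[where f = card]) (auto simp: same_order_le_iff)

lemma reduce_less_iff:
  assumes "finite A" "u \<in> A" "v \<in> A"
  shows "reduce A L u < reduce A L v \<longleftrightarrow> L u < L v"
proof -
  have strict: "reduce A L w < reduce A L w'" if "w \<in> A" "w' \<in> A" "L w < L w'" for w w'
    using assms(1) that unfolding reduce_def by (auto intro!: psubset_card_mono) force
  have mono: "reduce A L w \<le> reduce A L w'" if "w \<in> A" "w' \<in> A" "L w \<le> L w'" for w w'
    using assms(1) that unfolding reduce_def by (auto intro!: card_mono)
  show ?thesis
    using strict[OF assms(2,3)] mono[OF assms(3,2)] by (meson not_less)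
qed

lemma same_order_reduce: "finite A \<Longrightarrow> same_order A (reduce A L) L"
  by (simp add: same_order_def reduce_less_iff)

lemma reduce_in_labelings_on:
  assumes "finite A" "inj_on L A"
  shows "reduce A L \<in> labelings_on A"
proof (rule labelings_onI)
  show "inj_on (reduce A L) A"
  proof (rule inj_onI)
    fix x y assume xy: "x \<in> A" "y \<in> A" "reduce A L x = reduce A L y"
    then have "\<not> L x < L y" "\<not> L y < L x"
      using reduce_less_iff[OF assms(1)] by (metis less_irrefl)+
    then show "x = y" using inj_onD[OF assms(2)] xy by (meson linorder_neqE_nat)
  qed
  have "card {u \<in> A. L u \<le> L v} \<in> {1..card A}" if "v \<in> A" for v
  proof -
    have "{u \<in> A. L u \<le> L v} \<noteq> {}" using that by auto
    then have "0 < card {u \<in> A. L u \<le> L v}" using assms(1) by (simp add: card_gt_0_iff)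
    moreover have "card {u \<in> A. L u \<le> L v} \<le> card A" using assms(1) by (intro card_mono) auto
    ultimately show ?thesis by simp
  qed
  then show "reduce A L ` A \<subseteq> {1..card A}"
    unfolding reduce_def by auto
qed (use assms in \<open>auto simp: reduce_def\<close>)

lemma reduce_labeling:
  assumes "finite A" "M \<in> labelings_on A"
  shows "reduce A M = M"
proof
  fix v
  show "reduce A M v = M v"
  proof (cases "v \<in> A")
    case True
    have "M ` {u \<in> A. M u \<le> M v} = {1..M v}"
    proof (intro equalityI subsetI)
      fix y assume "y \<in> {1..M v}"
      moreover have "M v \<le> card A" using labelings_onD(2)[OF assms(2)] True by auto
      ultimately have "y \<in> M ` A" using labelings_onD(2)[OF assms(2)] by auto
      then show "y \<in> M ` {u \<in> A. M u \<le> M v}" using \<open>y \<in> {1..M v}\<close> by auto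
    qed (use labelings_onD(2)[OF assms(2)] in auto)
    moreover have "inj_on M {u \<in> A. M u \<le> M v}"
      using labelings_onD(1)[OF assms(2)] by (rule inj_on_subset) auto
    ultimately have "card {u \<in> A. M u \<le> M v} = M v"
      by (metis card_image card_atLeastAtMost diff_Suc_1)
    then show ?thesis
      using True by (simp add: reduce_def)
  next
    case False
    then show ?thesis using labelings_onD(3)[OF assms(2)] by (simp add: reduce_def extensional_def)
  qed
qed

lemma same_order_cong: "(\<And>v. v \<in> A \<Longrightarrow> L v = L' v) \<Longrightarrow> same_order A L \<rho> \<longleftrightarrow> same_order A L' \<rho>"
  unfolding same_order_def by simp

lemma order_invariant_conj:
  "order_invariant A \<Phi> \<Longrightarrow> order_invariant A \<Psi> \<Longrightarrow> order_invariant A (\<lambda>L. \<Phi> L \<and> \<Psi> L)"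
  unfolding order_invariant_def by blast

lemma order_invariant_mono: "order_invariant A \<Phi> \<Longrightarrow> A \<subseteq> A' \<Longrightarrow> order_invariant A' \<Phi>"
  unfolding order_invariant_def by (meson same_order_subset)

lemma order_invariant_same_order:
  assumes "\<And>j. j \<in> J \<Longrightarrow> C j \<subseteq> A"
  shows "order_invariant A (\<lambda>L. \<forall>j\<in>J. same_order (C j) L (\<rho> j))"
  unfolding order_invariant_def
  by (meson assms same_order_subset same_order_sym same_order_trans)

lemma reduce_image:
  assumes "inj_on L A" "v \<in> A"
  shows "reduce A L v = reduce (L ` A) id (L v)"
proof -
  have "{s \<in> L ` A. s \<le> L v} = L ` {u \<in> A. L u \<le> L v}" by auto
  moreover have "inj_on L {u \<in> A. L u \<le> L v}" using assms(1) by (rule inj_on_subset) auto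
  ultimately show ?thesis using assms(2) by (simp add: reduce_def card_image)
qed

definition nth_smallest :: "nat set \<Rightarrow> nat \<Rightarrow> nat" where
  "nth_smallest T j = enumerate T (j - 1)"

lemma nth_smallest_less_iff:
  "finite T \<Longrightarrow> i \<in> {1..card T} \<Longrightarrow> j \<in> {1..card T} \<Longrightarrow> nth_smallest T i < nth_smallest T j \<longleftrightarrow> i < j"
  unfolding nth_smallest_def by (subst finite_enumerate_mono_iff) auto

lemma nth_smallest_image: "finite T \<Longrightarrow> nth_smallest T ` {1..card T} = T"
proof -
  assume "finite T"
  then have "enumerate T ` {..<card T} = T" using finite_bij_enumerate by (metis bij_betw_imp_surj_on)
  then show ?thesis unfolding nth_smallest_def image_Suc_lessThan[symmetric] by (simp add: image_image)
qed

lemma nth_smallest_reduce: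
  assumes "finite T" "t \<in> T"
  shows "nth_smallest T (reduce T id t) = t"
proof -
  obtain n where n: "n < card T" "enumerate T n = t" using finite_enumerate_Ex[OF assms] by blast
  have "{s \<in> T. s \<le> t} = enumerate T ` {..n}"
  proof (intro equalityI subsetI)
    fix s assume s: "s \<in> {s \<in> T. s \<le> t}"
    then obtain n' where "n' < card T" "enumerate T n' = s" using finite_enumerate_Ex[OF assms(1)] by blast
    then show "s \<in> enumerate T ` {..n}" using s n assms(1) by (auto simp: not_less[symmetric])
  next
    fix s assume "s \<in> enumerate T ` {..n}"
    then obtain n' where "n' \<le> n" "s = enumerate T n'" by auto
    then show "s \<in> {s \<in> T. s \<le> t}"
      using n assms(1) finite_enumerate_in_set[OF assms(1)] by (auto simp: not_less[symmetric])
  qed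
  moreover have "inj_on (enumerate T) {..n}"
    using finite_bij_enumerate[OF assms(1)] n(1) by (auto simp: bij_betw_def intro: inj_on_subset)
  ultimately have "reduce T id t = Suc n" using assms(2) by (simp add: reduce_def card_image)
  then show ?thesis using n by (simp add: nth_smallest_def)
qed

lemma nth_smallest_labeling:
  assumes "finite A" "finite T" "card T = card A" "M \<in> labelings_on A"
  shows "same_order A (\<lambda>v. nth_smallest T (M v)) M" "(\<lambda>v. nth_smallest T (M v)) ` A = T"
    "inj_on (\<lambda>v. nth_smallest T (M v)) A"
proof -
  note M = labelings_onD[OF assms(4)]
  have range: "M v \<in> {1..card T}" if "v \<in> A" for v using M(2) assms(3) that by auto
  show "same_order A (\<lambda>v. nth_smallest T (M v)) M"
    using range by (auto simp: same_order_def nth_smallest_less_iff[OF assms(2)])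
  show img: "(\<lambda>v. nth_smallest T (M v)) ` A = T"
    using M(2) nth_smallest_image[OF assms(2)] assms(3) by (simp add: image_image[symmetric])
  show "inj_on (\<lambda>v. nth_smallest T (M v)) A"
    using assms(1,3) img by (intro eq_card_imp_inj_on) simp_all
qed

lemma labelings_on_image_complement:
  assumes "L \<in> labelings_on (A \<union> B)" "A \<inter> B = {}"
  shows "L ` B = {1..card (A \<union> B)} - L ` A"
proof -
  have "B = (A \<union> B) - A" using assms(2) by blast
  then have "L ` B = L ` (A \<union> B) - L ` A"
    using inj_on_image_set_diff[OF labelings_onD(1)[OF assms(1)]] by (metis Un_upper1 Un_upper2)
  then show ?thesis using labelings_onD(2)[OF assms(1)] by simp
qed

definition merge_labelings ::
    "'v set \<Rightarrow> 'v set \<Rightarrow> nat set \<Rightarrow> ('v \<Rightarrow> nat) \<Rightarrow> ('v \<Rightarrow> nat) \<Rightarrow> 'v \<Rightarrow> nat" where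
  "merge_labelings A B T M1 M2 v = (if v \<in> A then nth_smallest T (M1 v)
     else if v \<in> B then nth_smallest ({1..card (A \<union> B)} - T) (M2 v) else undefined)"

lemma merge_labelings_props:
  assumes fin: "finite A" "finite B" and disj: "A \<inter> B = {}"
    and T: "T \<subseteq> {1..card (A \<union> B)}" "card T = card A"
    and M: "M1 \<in> labelings_on A" "M2 \<in> labelings_on B"
  defines "L \<equiv> merge_labelings A B T M1 M2"
  shows "L \<in> labelings_on (A \<union> B)" "L ` A = T" "same_order A L M1" "same_order B L M2"
proof -
  define T' where "T' = {1..card (A \<union> B)} - T"
  have finT: "finite T" "finite T'" using T(1) finite_subset unfolding T'_def by auto
  have cardT': "card T' = card B"
    using T fin disj unfolding T'_def by (simp add: card_Diff_subset finT(1) card_Un_disjoint)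
  have onA: "L v = nth_smallest T (M1 v)" if "v \<in> A" for v
    using that unfolding L_def merge_labelings_def by simp
  have onB: "L v = nth_smallest T' (M2 v)" if "v \<in> B" for v
    using that disj unfolding L_def merge_labelings_def T'_def by auto
  note A_part = nth_smallest_labeling[OF fin(1) finT(1) T(2) M(1)]
  note B_part = nth_smallest_labeling[OF fin(2) finT(2) cardT' M(2)]
  show imgA: "L ` A = T" using A_part(2) onA by (simp add: image_def)
  have imgB: "L ` B = T'" using B_part(2) onB by (simp add: image_def)
  have "inj_on L (A \<union> B)"
  proof (rule inj_on_Un[THEN iffD2], intro conjI)
    show "inj_on L A" using A_part(3) onA by (simp add: inj_on_def)
    show "inj_on L B" using B_part(3) onB by (simp add: inj_on_def)
    show "L ` (A - B) \<inter> L ` (B - A) = {}" using imgA imgB unfolding T'_def by blast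
  qed
  moreover have "L ` (A \<union> B) \<subseteq> {1..card (A \<union> B)}"
    using imgA imgB T(1) unfolding T'_def by auto
  moreover have "L \<in> extensional (A \<union> B)" by (simp add: L_def merge_labelings_def extensional_def)
  ultimately show "L \<in> labelings_on (A \<union> B)" using fin by (intro labelings_onI) auto
  show "same_order A L M1" using same_order_cong[of A L] onA A_part(1) by simp
  show "same_order B L M2" using same_order_cong[of B L] onB B_part(1) by simp
qed

lemma merge_labelings_reduce:
  assumes fin: "finite A" "finite B" and disj: "A \<inter> B = {}" and L: "L \<in> labelings_on (A \<union> B)"
  shows "merge_labelings A B (L ` A) (reduce A L) (reduce B L) = L"
proof
  fix v
  have inj: "inj_on L A" "inj_on L B" using labelings_onD(1)[OF L] by (auto intro: inj_on_subset)
  consider "v \<in> A" | "v \<in> B" "v \<notin> A" | "v \<notin> A \<union> B" by blast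
  then show "merge_labelings A B (L ` A) (reduce A L) (reduce B L) v = L v"
  proof cases
    case 1
    then show ?thesis
      using fin nth_smallest_reduce reduce_image[OF inj(1)] by (simp add: merge_labelings_def)
  next
    case 2
    then have "L v \<in> {1..card (A \<union> B)} - L ` A" using labelings_on_image_complement[OF L disj] by blast
    then show ?thesis
      using 2 nth_smallest_reduce reduce_image[OF inj(2)] labelings_on_image_complement[OF L disj]
      by (simp add: merge_labelings_def)
  next
    case 3
    then show ?thesis
      using labelings_onD(3)[OF L] by (simp add: merge_labelings_def extensional_def)
  qed
qed

lemma card_labelings_on_fixed_image:
  assumes fin: "finite A" "finite B" and disj: "A \<inter> B = {}"
    and inv: "order_invariant A \<Phi>" "order_invariant B \<Psi>"
    and T: "T \<subseteq> {1..card (A \<union> B)}" "card T = card A"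
  shows "card {L \<in> labelings_on (A \<union> B). L ` A = T \<and> \<Phi> L \<and> \<Psi> L}
       = card {M \<in> labelings_on A. \<Phi> M} * card {M \<in> labelings_on B. \<Psi> M}"
proof -
  define X where "X = {L \<in> labelings_on (A \<union> B). L ` A = T \<and> \<Phi> L \<and> \<Psi> L}"
  define Y where "Y = {M \<in> labelings_on A. \<Phi> M} \<times> {M \<in> labelings_on B. \<Psi> M}"
  have "bij_betw (\<lambda>L. (reduce A L, reduce B L)) X Y"
  proof (rule bij_betw_byWitness[where f' = "\<lambda>(M1, M2). merge_labelings A B T M1 M2"])
    show "\<forall>L\<in>X. (\<lambda>(M1, M2). merge_labelings A B T M1 M2) (reduce A L, reduce B L) = L"
      using merge_labelings_reduce[OF fin disj] unfolding X_def by auto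
    have "reduce A (merge_labelings A B T M1 M2) = M1" "reduce B (merge_labelings A B T M1 M2) = M2"
      if "M1 \<in> labelings_on A" "M2 \<in> labelings_on B" for M1 M2
      using reduce_cong[OF merge_labelings_props(3)[OF fin disj T that]] reduce_labeling[OF fin(1) that(1)]
        reduce_cong[OF merge_labelings_props(4)[OF fin disj T that]] reduce_labeling[OF fin(2) that(2)]
      by simp_all
    then show "\<forall>y\<in>Y. (\<lambda>L. (reduce A L, reduce B L)) ((\<lambda>(M1, M2). merge_labelings A B T M1 M2) y) = y"
      unfolding Y_def by auto
    show "(\<lambda>L. (reduce A L, reduce B L)) ` X \<subseteq> Y"
    proof
      fix p assume "p \<in> (\<lambda>L. (reduce A L, reduce B L)) ` X"
      then obtain L where L: "L \<in> X" "p = (reduce A L, reduce B L)" by auto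
      have inj: "inj_on L A" "inj_on L B"
        using labelings_onD(1) L unfolding X_def by (auto intro: inj_on_subset)
      have "\<Phi> (reduce A L) = \<Phi> L" "\<Psi> (reduce B L) = \<Psi> L"
        using order_invariantD[OF inv(1)] order_invariantD[OF inv(2)] same_order_reduce fin by blast+
      then show "p \<in> Y"
        using L reduce_in_labelings_on[OF fin(1) inj(1)] reduce_in_labelings_on[OF fin(2) inj(2)]
        unfolding X_def Y_def by auto
    qed
    show "(\<lambda>(M1, M2). merge_labelings A B T M1 M2) ` Y \<subseteq> X"
      using merge_labelings_props[OF fin disj T] order_invariantD[OF inv(1)] order_invariantD[OF inv(2)]
      unfolding X_def Y_def by fastforce
  qed
  then show ?thesis
    unfolding X_def Y_def by (simp add: bij_betw_same_card card_cartesian_product)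
qed

lemma card_labelings_on_Un:
  assumes fin: "finite A" "finite B" and disj: "A \<inter> B = {}"
    and inv: "order_invariant A \<Phi>" "order_invariant B \<Psi>"
  shows "card {L \<in> labelings_on (A \<union> B). \<Phi> L \<and> \<Psi> L}
       = (card (A \<union> B) choose card A) * (card {M \<in> labelings_on A. \<Phi> M} * card {M \<in> labelings_on B. \<Psi> M})"
proof -
  define Ts where "Ts = {T. T \<subseteq> {1..card (A \<union> B)} \<and> card T = card A}"
  define X where "X = (\<lambda>T. {L \<in> labelings_on (A \<union> B). L ` A = T \<and> \<Phi> L \<and> \<Psi> L})"
  have "{L \<in> labelings_on (A \<union> B). \<Phi> L \<and> \<Psi> L} = (\<Union>T\<in>Ts. X T)"
  proof (intro equalityI subsetI)
    fix L assume L: "L \<in> {L \<in> labelings_on (A \<union> B). \<Phi> L \<and> \<Psi> L}"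
    then have "L ` A \<in> Ts"
      using labelings_onD(1,2)[of L "A \<union> B"] unfolding Ts_def
      by (auto simp: card_image inj_on_subset)
    then show "L \<in> (\<Union>T\<in>Ts. X T)" using L unfolding X_def by blast
  qed (auto simp: X_def)
  moreover have "card (\<Union>T\<in>Ts. X T) = (\<Sum>T\<in>Ts. card (X T))"
    using fin by (intro card_UN_disjoint) (auto simp: Ts_def X_def finite_labelings_on)
  moreover have "card (X T) = card {M \<in> labelings_on A. \<Phi> M} * card {M \<in> labelings_on B. \<Psi> M}"
    if "T \<in> Ts" for T
    using card_labelings_on_fixed_image[OF fin disj inv] that unfolding Ts_def X_def by blast
  ultimately show ?thesis by (simp add: Ts_def n_subsets)
qed

lemma labelings_on_below_iff:
  assumes fin: "finite A" "finite B" and disj: "A \<inter> B = {}" and L: "L \<in> labelings_on (A \<union> B)"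
  shows "(\<forall>u\<in>A. \<forall>v\<in>B. L u < L v) \<longleftrightarrow> L ` A = {1..card A}"
proof
  assume below: "\<forall>u\<in>A. \<forall>v\<in>B. L u < L v"
  have "L v \<le> card A" if "v \<in> A" for v
  proof -
    have "L v = reduce (A \<union> B) L v" using reduce_labeling[OF _ L] fin by simp
    also have "\<dots> = card {u \<in> A. L u \<le> L v}"
      using that below unfolding reduce_def by (auto intro!: arg_cong[where f = card] dest: leD)
    also have "\<dots> \<le> card A" using fin(1) by (intro card_mono) auto
    finally show ?thesis .
  qed
  moreover have "1 \<le> L v" if "v \<in> A" for v
    using labelings_onD(2)[OF L] that by (metis UnI1 atLeastAtMost_iff imageI)
  ultimately have "L ` A \<subseteq> {1..card A}" by auto
  moreover have "card (L ` A) = card A"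
    using labelings_onD(1)[OF L] by (simp add: card_image inj_on_subset)
  ultimately show "L ` A = {1..card A}" by (intro card_subset_eq) auto
next
  assume imgA: "L ` A = {1..card A}"
  show "\<forall>u\<in>A. \<forall>v\<in>B. L u < L v"
  proof (intro ballI)
    fix u v assume "u \<in> A" "v \<in> B"
    then have "L u \<le> card A" "L v \<notin> {1..card A}" "1 \<le> L v"
      using imgA labelings_on_image_complement[OF L disj] by auto
    then show "L u < L v" by simp
  qed
qed

lemma card_labelings_on_stacked:
  assumes fin: "finite A" "finite B" and disj: "A \<inter> B = {}"
    and inv: "order_invariant A \<Phi>" "order_invariant B \<Psi>"
  shows "card {L \<in> labelings_on (A \<union> B). (\<forall>u\<in>A. \<forall>v\<in>B. L u < L v) \<and> \<Phi> L \<and> \<Psi> L}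
       = card {M \<in> labelings_on A. \<Phi> M} * card {M \<in> labelings_on B. \<Psi> M}"
proof -
  have "{L \<in> labelings_on (A \<union> B). (\<forall>u\<in>A. \<forall>v\<in>B. L u < L v) \<and> \<Phi> L \<and> \<Psi> L}
      = {L \<in> labelings_on (A \<union> B). L ` A = {1..card A} \<and> \<Phi> L \<and> \<Psi> L}"
    using labelings_on_below_iff[OF fin disj] by blast
  then show ?thesis
    using card_labelings_on_fixed_image[OF fin disj inv] fin disj by (simp add: card_Un_disjoint)
qed

lemma card_labelings_on_pivot:
  assumes fin: "finite A" "finite B" and disj: "A \<inter> B = {}" "x \<notin> A" "x \<notin> B"
    and inv: "order_invariant B \<Phi>" "order_invariant A \<Psi>"
  shows "card {L \<in> labelings_on (insert x (B \<union> A)).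
               (\<forall>v\<in>B. L v < L x) \<and> (\<forall>v\<in>A. L x < L v) \<and> \<Phi> L \<and> \<Psi> L}
       = card {M \<in> labelings_on B. \<Phi> M} * card {M \<in> labelings_on A. \<Psi> M}"
proof -
  define \<Phi>' where "\<Phi>' = (\<lambda>L. (\<forall>v\<in>B. L v < L x) \<and> \<Phi> L)"
  have inv': "order_invariant (insert x B) \<Phi>'"
  proof -
    have "order_invariant (insert x B) (\<lambda>L. \<forall>v\<in>B. L v < L x)"
      unfolding order_invariant_def same_order_def by blast
    then show ?thesis
      unfolding \<Phi>'_def using inv(1) by (auto intro: order_invariant_conj order_invariant_mono)
  qed
  have "{L \<in> labelings_on (insert x (B \<union> A)). (\<forall>v\<in>B. L v < L x) \<and> (\<forall>v\<in>A. L x < L v) \<and> \<Phi> L \<and> \<Psi> L}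
      = {L \<in> labelings_on (insert x B \<union> A). (\<forall>u\<in>insert x B. \<forall>v\<in>A. L u < L v) \<and> \<Phi>' L \<and> \<Psi> L}"
    unfolding \<Phi>'_def by (auto dest: less_trans)
  moreover have "card {M \<in> labelings_on (B \<union> {x}). \<Phi>' M} = card {M \<in> labelings_on B. \<Phi> M}"
    using card_labelings_on_stacked[where A = B and B = "{x}" and \<Phi> = \<Phi> and \<Psi> = "\<lambda>_. True"]
      fin(2) disj inv(1) by (simp add: \<Phi>'_def labelings_on_singleton order_invariant_def)
  ultimately show ?thesis
    using card_labelings_on_stacked[OF _ fin(1) _ inv' inv(2)] fin disj by (simp add: Int_commute)
qed

lemma card_labelings_on_same_order:
  assumes "finite C" "inj_on \<rho> C"
  shows "card {L \<in> labelings_on C. same_order C L \<rho>} = 1"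
proof -
  have "{L \<in> labelings_on C. same_order C L \<rho>} = {reduce C \<rho>}"
  proof (intro equalityI subsetI)
    fix L assume "L \<in> {L \<in> labelings_on C. same_order C L \<rho>}"
    then have L: "L \<in> labelings_on C" "same_order C L \<rho>" by auto
    show "L \<in> {reduce C \<rho>}" using reduce_labeling[OF assms(1) L(1)] reduce_cong[OF L(2)] by simp
  qed (use assms reduce_in_labelings_on same_order_reduce in auto)
  then show ?thesis by simp
qed

lemma card_labelings_on_chains:
  fixes r :: nat and C :: "nat \<Rightarrow> 'v set" and \<rho> :: "nat \<Rightarrow> 'v \<Rightarrow> nat"
  assumes "\<forall>j<r. finite (C j) \<and> inj_on (\<rho> j) (C j)"
    and "\<forall>j<r. \<forall>j'<r. j \<noteq> j' \<longrightarrow> C j \<inter> C j' = {}"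
  shows "card {L \<in> labelings_on (\<Union>j<r. C j). \<forall>j<r. same_order (C j) L (\<rho> j)}
       = (\<Prod>j<r. (\<Sum>l\<le>j. card (C l)) choose card (C j))"
  using assms
proof (induction r)
  case 0
  then show ?case by (simp add: labelings_on_def bij_betw_def)
next
  case (Suc r)
  define B where "B = (\<Union>j<r. C j)"
  have fin: "finite (C r)" "finite B" using Suc.prems(1) unfolding B_def by auto
  have "C r \<inter> C j = {}" if "j < r" for j using Suc.prems(2)[rule_format, of r j] that by simp
  then have disj: "C r \<inter> B = {}" unfolding B_def by blast
  have card_B: "card B = (\<Sum>j<r. card (C j))"
    unfolding B_def using Suc.prems by (intro card_UN_disjoint) auto
  have "card {L \<in> labelings_on (C r \<union> B). same_order (C r) L (\<rho> r) \<and> (\<forall>j<r. same_order (C j) L (\<rho> j))}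
      = (card (C r \<union> B) choose card (C r)) * (card {M \<in> labelings_on (C r). same_order (C r) M (\<rho> r)}
          * card {M \<in> labelings_on B. \<forall>j<r. same_order (C j) M (\<rho> j)})"
    using order_invariant_same_order[of "{r}" C "C r" \<rho>] order_invariant_same_order[of "{..<r}" C B \<rho>]
    by (intro card_labelings_on_Un fin disj) (auto simp: B_def Ball_def)
  also have "\<dots> = ((\<Sum>l\<le>r. card (C l)) choose card (C r)) * (\<Prod>j<r. (\<Sum>l\<le>j. card (C l)) choose card (C j))"
    using card_labelings_on_same_order[OF fin(1)] Suc card_B fin disj
    by (simp add: B_def card_Un_disjoint lessThan_Suc_atMost[symmetric] add.commute)
  moreover have "{L \<in> labelings_on (\<Union>j<Suc r. C j). \<forall>j<Suc r. same_order (C j) L (\<rho> j)}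
      = {L \<in> labelings_on (C r \<union> B). same_order (C r) L (\<rho> r) \<and> (\<forall>j<r. same_order (C j) L (\<rho> j))}"
    unfolding B_def by (auto simp: lessThan_Suc less_Suc_eq)
  ultimately show ?case by simp
qed

lemma card_labelings_on_pivot_chains:
  fixes Lo Hi :: "nat \<Rightarrow> 'v set" and \<rho> :: "nat \<Rightarrow> 'v \<Rightarrow> nat" and r :: nat
  defines "B \<equiv> \<Union>j<r. Lo j" and "A \<equiv> \<Union>j<r. Hi j"
  assumes chains: "\<forall>j<r. finite (Lo j) \<and> inj_on (\<rho> j) (Lo j)" "\<forall>j<r. finite (Hi j) \<and> inj_on (\<rho> j) (Hi j)"
    and disj: "\<forall>j<r. \<forall>j'<r. j \<noteq> j' \<longrightarrow> Lo j \<inter> Lo j' = {}" "\<forall>j<r. \<forall>j'<r. j \<noteq> j' \<longrightarrow> Hi j \<inter> Hi j' = {}"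
      "A \<inter> B = {}" "x \<notin> A" "x \<notin> B"
  shows "card {L \<in> labelings_on (insert x (B \<union> A)). (\<forall>v\<in>B. L v < L x) \<and> (\<forall>v\<in>A. L x < L v)
           \<and> (\<forall>j<r. same_order (Lo j) L (\<rho> j)) \<and> (\<forall>j<r. same_order (Hi j) L (\<rho> j))}
       = (\<Prod>j<r. (\<Sum>l\<le>j. card (Lo l)) choose card (Lo j)) * (\<Prod>j<r. (\<Sum>l\<le>j. card (Hi l)) choose card (Hi j))"
proof -
  have "card {L \<in> labelings_on (insert x (B \<union> A)). (\<forall>v\<in>B. L v < L x) \<and> (\<forall>v\<in>A. L x < L v)
           \<and> (\<forall>j<r. same_order (Lo j) L (\<rho> j)) \<and> (\<forall>j<r. same_order (Hi j) L (\<rho> j))}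
      = card {M \<in> labelings_on B. \<forall>j<r. same_order (Lo j) M (\<rho> j)}
      * card {M \<in> labelings_on A. \<forall>j<r. same_order (Hi j) M (\<rho> j)}"
  proof (rule card_labelings_on_pivot)
    show "finite A" "finite B" using chains unfolding A_def B_def by auto
    show "order_invariant B (\<lambda>L. \<forall>j<r. same_order (Lo j) L (\<rho> j))"
      using order_invariant_same_order[of "{..<r}" Lo B \<rho>] unfolding B_def by (auto simp: Ball_def)
    show "order_invariant A (\<lambda>L. \<forall>j<r. same_order (Hi j) L (\<rho> j))"
      using order_invariant_same_order[of "{..<r}" Hi A \<rho>] unfolding A_def by (auto simp: Ball_def)
  qed (use disj in auto)
  also have "\<dots> = (\<Prod>j<r. (\<Sum>l\<le>j. card (Lo l)) choose card (Lo j)) * (\<Prod>j<r. (\<Sum>l\<le>j. card (Hi l)) choose card (Hi j))"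
    unfolding A_def B_def using chains disj(1,2) by (simp add: card_labelings_on_chains)
  finally show ?thesis .
qed

section \<open>Consecutive instances on paths through a common vertex\<close>

lemma same_order_split_at:
  assumes "inj_on \<rho> V" "x \<in> V"
  shows "same_order V L \<rho> \<longleftrightarrow>
    (\<forall>v\<in>{v \<in> V. \<rho> v < \<rho> x}. L v < L x) \<and> (\<forall>v\<in>{v \<in> V. \<rho> x < \<rho> v}. L x < L v) \<and>
    same_order {v \<in> V. \<rho> v < \<rho> x} L \<rho> \<and> same_order {v \<in> V. \<rho> x < \<rho> v} L \<rho>"
proof
  assume so: "same_order V L \<rho>"
  then have "same_order {v \<in> V. \<rho> v < \<rho> x} L \<rho>" "same_order {v \<in> V. \<rho> x < \<rho> v} L \<rho>"
    by (auto intro: same_order_subset)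
  moreover have "\<forall>v\<in>{v \<in> V. \<rho> v < \<rho> x}. L v < L x" "\<forall>v\<in>{v \<in> V. \<rho> x < \<rho> v}. L x < L v"
    using so assms(2) unfolding same_order_def by auto
  ultimately show "(\<forall>v\<in>{v \<in> V. \<rho> v < \<rho> x}. L v < L x) \<and> (\<forall>v\<in>{v \<in> V. \<rho> x < \<rho> v}. L x < L v) \<and>
    same_order {v \<in> V. \<rho> v < \<rho> x} L \<rho> \<and> same_order {v \<in> V. \<rho> x < \<rho> v} L \<rho>"
    by blast
next
  assume split: "(\<forall>v\<in>{v \<in> V. \<rho> v < \<rho> x}. L v < L x) \<and> (\<forall>v\<in>{v \<in> V. \<rho> x < \<rho> v}. L x < L v) \<and>
    same_order {v \<in> V. \<rho> v < \<rho> x} L \<rho> \<and> same_order {v \<in> V. \<rho> x < \<rho> v} L \<rho>"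
  have side: "v = x \<or> \<rho> v < \<rho> x \<or> \<rho> x < \<rho> v" if "v \<in> V" for v
    using inj_onD[OF assms(1) _ that assms(2)] by (meson linorder_neqE_nat)
  have lo: "L v < L x" and lolo: "\<And>u. u \<in> V \<Longrightarrow> \<rho> u < \<rho> x \<Longrightarrow> L u < L v \<longleftrightarrow> \<rho> u < \<rho> v"
    if "v \<in> V" "\<rho> v < \<rho> x" for v
    using split that unfolding same_order_def by auto
  have hi: "L x < L v" and hihi: "\<And>u. u \<in> V \<Longrightarrow> \<rho> x < \<rho> u \<Longrightarrow> L u < L v \<longleftrightarrow> \<rho> u < \<rho> v"
    if "v \<in> V" "\<rho> x < \<rho> v" for v
    using split that unfolding same_order_def by auto
  show "same_order V L \<rho>"
    unfolding same_order_def
  proof (intro ballI)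
    fix u v assume u: "u \<in> V" and v: "v \<in> V"
    from side[OF u] side[OF v] show "L u < L v \<longleftrightarrow> \<rho> u < \<rho> v"
      using lo[OF u] lo[OF v] hi[OF u] hi[OF v] lolo[OF v _ u] hihi[OF v _ u]
      by (elim disjE) (metis less_trans less_asym less_irrefl)+
  qed
qed

lemma card_less_bij_betw:
  assumes "bij_betw \<rho> V {1..k}" "x \<in> V"
  shows "card {v \<in> V. \<rho> v < \<rho> x} = \<rho> x - 1" "card {v \<in> V. \<rho> x < \<rho> v} = k - \<rho> x"
proof -
  have img: "\<rho> ` V = {1..k}" using assms(1) by (simp add: bij_betw_def)
  have image: "\<rho> ` {v \<in> V. P (\<rho> v)} = {y \<in> {1..k}. P y}" for P
  proof (intro equalityI subsetI)
    fix y assume "y \<in> {y \<in> {1..k}. P y}"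
    moreover from this obtain v where "v \<in> V" "y = \<rho> v" using img by (metis (no_types, lifting) imageE mem_Collect_eq)
    ultimately show "y \<in> \<rho> ` {v \<in> V. P (\<rho> v)}" by auto
  qed (use img in auto)
  have "\<rho> x \<in> {1..k}" using assms by (auto simp: bij_betw_def)
  then have "\<rho> ` {v \<in> V. \<rho> v < \<rho> x} = {1..<\<rho> x}" "\<rho> ` {v \<in> V. \<rho> x < \<rho> v} = {\<rho> x<..k}"
    using image[of "\<lambda>y. y < \<rho> x"] image[of "\<lambda>y. \<rho> x < y"] by auto
  moreover have "inj_on \<rho> {v \<in> V. \<rho> v < \<rho> x}" "inj_on \<rho> {v \<in> V. \<rho> x < \<rho> v}"
    using assms(1) unfolding bij_betw_def by (auto intro: inj_on_subset)
  ultimately show "card {v \<in> V. \<rho> v < \<rho> x} = \<rho> x - 1" "card {v \<in> V. \<rho> x < \<rho> v} = k - \<rho> x"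
    by (metis card_atLeastLessThan card_greaterThanAtMost card_image)+
qed

definition path_order :: "(nat \<Rightarrow> nat) \<Rightarrow> 'v list \<Rightarrow> 'v \<Rightarrow> nat" where
  "path_order \<pi> p v = \<pi> (Suc (the_inv_into {..<length p} ((!) p) v))"

lemma path_order_nth: "distinct p \<Longrightarrow> s < length p \<Longrightarrow> path_order \<pi> p (p ! s) = \<pi> (Suc s)"
  by (simp add: path_order_def the_inv_into_f_f inj_on_nth)

lemma bij_betw_path_order:
  assumes "pattern (length p) \<pi>" "distinct p"
  shows "bij_betw (path_order \<pi> p) (set p) {1..length p}"
proof -
  have "bij_betw (the_inv_into {..<length p} ((!) p)) (set p) {..<length p}"
    using assms(2) by (intro bij_betw_the_inv_into bij_betw_nth) simp_all
  moreover have "bij_betw Suc {..<length p} {1..length p}"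
    by (simp add: bij_betw_def image_Suc_lessThan)
  ultimately have "bij_betw (Suc \<circ> the_inv_into {..<length p} ((!) p)) (set p) {1..length p}"
    by (rule bij_betw_trans)
  then have "bij_betw (\<pi> \<circ> (Suc \<circ> the_inv_into {..<length p} ((!) p))) (set p) {1..length p}"
    using assms(1) unfolding pattern_def by (rule bij_betw_trans)
  then show ?thesis by (simp add: path_order_def[abs_def] comp_def)
qed

lemma is_instance_iff_same_order:
  assumes "distinct p" "length p = k"
  shows "is_instance k \<pi> L p \<longleftrightarrow> same_order (set p) L (path_order \<pi> p)"
proof -
  have "set p = (!) p ` {..<k}" using assms(2) by (auto simp: in_set_conv_nth)
  then show ?thesis using assms by (auto simp: is_instance_def same_order_def path_order_nth)
qed

definition lower_part :: "(nat \<Rightarrow> nat) \<Rightarrow> 'v list \<Rightarrow> 'v \<Rightarrow> 'v set" where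
  "lower_part \<pi> p x = {v \<in> set p. path_order \<pi> p v < path_order \<pi> p x}"

definition upper_part :: "(nat \<Rightarrow> nat) \<Rightarrow> 'v list \<Rightarrow> 'v \<Rightarrow> 'v set" where
  "upper_part \<pi> p x = {v \<in> set p. path_order \<pi> p x < path_order \<pi> p v}"

lemma is_instance_iff_pivot:
  assumes "pattern k \<pi>" "distinct p" "length p = k" "x \<in> set p"
  shows "is_instance k \<pi> L p \<longleftrightarrow> (\<forall>v\<in>lower_part \<pi> p x. L v < L x) \<and> (\<forall>v\<in>upper_part \<pi> p x. L x < L v)
    \<and> same_order (lower_part \<pi> p x) L (path_order \<pi> p) \<and> same_order (upper_part \<pi> p x) L (path_order \<pi> p)"
  using is_instance_iff_same_order[OF assms(2,3)] same_order_split_at[OF _ assms(4)]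
    bij_betw_path_order[of p \<pi>] assms unfolding lower_part_def upper_part_def bij_betw_def by auto

lemma pivot_parts:
  assumes "pattern k \<pi>" "distinct p" "length p = k" "h < k"
  shows "set p = insert (p ! h) (lower_part \<pi> p (p ! h) \<union> upper_part \<pi> p (p ! h))"
    and "card (lower_part \<pi> p (p ! h)) = \<pi> (Suc h) - 1" "card (upper_part \<pi> p (p ! h)) = k - \<pi> (Suc h)"
proof -
  have bij: "bij_betw (path_order \<pi> p) (set p) {1..k}"
    using bij_betw_path_order[of p \<pi>] assms by simp
  have x: "p ! h \<in> set p" "path_order \<pi> p (p ! h) = \<pi> (Suc h)"
    using assms path_order_nth[of p h \<pi>] by auto
  show "set p = insert (p ! h) (lower_part \<pi> p (p ! h) \<union> upper_part \<pi> p (p ! h))"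
    using bij x(1) unfolding lower_part_def upper_part_def bij_betw_def inj_on_def
    by (auto dest: linorder_neqE_nat)
  show "card (lower_part \<pi> p (p ! h)) = \<pi> (Suc h) - 1" "card (upper_part \<pi> p (p ! h)) = k - \<pi> (Suc h)"
    using card_less_bij_betw[OF bij x(1)] x(2) unfolding lower_part_def upper_part_def by simp_all
qed

lemma card_labelings_on_star_instances:
  fixes p :: "nat \<Rightarrow> nat list" and h :: "nat \<Rightarrow> nat" and r :: nat
  assumes \<pi>: "pattern k \<pi>"
    and paths: "\<forall>j<r. distinct (p j) \<and> length (p j) = k \<and> h j < k \<and> p j ! h j = x"
    and meet: "\<forall>j<r. \<forall>j'<r. j \<noteq> j' \<longrightarrow> set (p j) \<inter> set (p j') \<subseteq> {x}"
  shows "card {L \<in> labelings_on (insert x (\<Union>j<r. set (p j))). \<forall>j<r. is_instance k \<pi> L (p j)}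
       = (\<Prod>j<r. (\<Sum>l\<le>j. \<pi> (Suc (h l)) - 1) choose (\<pi> (Suc (h j)) - 1))
         * (\<Prod>j<r. (\<Sum>l\<le>j. k - \<pi> (Suc (h l))) choose (k - \<pi> (Suc (h j))))"
proof -
  define \<rho> where "\<rho> j = path_order \<pi> (p j)" for j
  define Lo where "Lo j = lower_part \<pi> (p j) x" for j
  define Hi where "Hi j = upper_part \<pi> (p j) x" for j
  have split: "set (p j) = insert x (Lo j \<union> Hi j)" "card (Lo j) = \<pi> (Suc (h j)) - 1"
    "card (Hi j) = k - \<pi> (Suc (h j))" if "j < r" for j
    using pivot_parts[OF \<pi>, of "p j" "h j"] paths that unfolding Lo_def Hi_def by auto
  have disj_parts: "Lo j \<inter> Hi j' = {}" "j \<noteq> j' \<Longrightarrow> Lo j \<inter> Lo j' = {}" "j \<noteq> j' \<Longrightarrow> Hi j \<inter> Hi j' = {}"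
    if "j < r" "j' < r" for j j'
    using meet that unfolding Lo_def Hi_def lower_part_def upper_part_def by (cases "j = j'"; fastforce)+
  have chains: "\<forall>j<r. finite (Lo j) \<and> inj_on (\<rho> j) (Lo j)" "\<forall>j<r. finite (Hi j) \<and> inj_on (\<rho> j) (Hi j)"
    using bij_betw_path_order[of "p j" \<pi> for j] paths \<pi>
    unfolding \<rho>_def Lo_def Hi_def lower_part_def upper_part_def bij_betw_def by (auto intro: inj_on_subset)
  have "insert x (\<Union>j<r. set (p j)) = insert x ((\<Union>j<r. Lo j) \<union> (\<Union>j<r. Hi j))"
    using split(1) by auto
  moreover have "is_instance k \<pi> L (p j) \<longleftrightarrow> (\<forall>v\<in>Lo j. L v < L x) \<and> (\<forall>v\<in>Hi j. L x < L v)
      \<and> same_order (Lo j) L (\<rho> j) \<and> same_order (Hi j) L (\<rho> j)" if "j < r" for j L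
  proof -
    have "x \<in> set (p j)" using paths that nth_mem[of "h j" "p j"] by auto
    then show ?thesis
      using is_instance_iff_pivot[OF \<pi>, of "p j" x L] paths that unfolding Lo_def Hi_def \<rho>_def by simp
  qed
  ultimately have "{L \<in> labelings_on (insert x (\<Union>j<r. set (p j))). \<forall>j<r. is_instance k \<pi> L (p j)}
      = {L \<in> labelings_on (insert x ((\<Union>j<r. Lo j) \<union> (\<Union>j<r. Hi j))).
           (\<forall>v\<in>(\<Union>j<r. Lo j). L v < L x) \<and> (\<forall>v\<in>(\<Union>j<r. Hi j). L x < L v)
           \<and> (\<forall>j<r. same_order (Lo j) L (\<rho> j)) \<and> (\<forall>j<r. same_order (Hi j) L (\<rho> j))}"
    by auto
  moreover have "x \<notin> (\<Union>j<r. Lo j)" "x \<notin> (\<Union>j<r. Hi j)"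
    unfolding Lo_def Hi_def lower_part_def upper_part_def by auto
  moreover have "(\<Union>j<r. Hi j) \<inter> (\<Union>j<r. Lo j) = {}" using disj_parts by blast
  ultimately show ?thesis
    using card_labelings_on_pivot_chains[OF chains] disj_parts(2,3) split(2,3)
    by (auto intro!: arg_cong2[where f = "(*)"] prod.cong arg_cong2[where f = binomial] sum.cong)
qed

section \<open>Products of binomial coefficients\<close>

lemma choose_mult_fact_eq_prod: "((N + a) choose a) * fact a = (\<Prod>t\<in>{1..a}. N + t :: nat)"
proof (induction a)
  case (Suc a)
  have "((N + Suc a) choose Suc a) * fact (Suc a) = (Suc (N + a) choose Suc a) * Suc a * fact a"
    by (simp add: algebra_simps)
  also have "\<dots> = (N + Suc a) * (((N + a) choose a) * fact a)"
    using Suc_times_binomial_eq[of "N + a" a] by (simp add: algebra_simps)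
  also have "\<dots> = (\<Prod>t\<in>{1..Suc a}. N + t)" using Suc.IH by (simp add: prod.cl_ivl_Suc)
  finally show ?case .
qed simp

lemma binomial_products_cancel:
  fixes a a' b b' c d m :: nat
  assumes le: "a \<le> a'" "b' \<le> b"
    and eq: "((m*c + a) choose a) * ((m*d + b) choose b) = ((m*c + a') choose a') * ((m*d + b') choose b')"
  shows "fact a' * fact b' * (\<Prod>t\<in>{b'<..b}. m*d + t) = fact a * fact b * (\<Prod>t\<in>{a<..a'}. m*c + t)"
proof -
  define P where "P e x = (\<Prod>t\<in>{1..x}. m*e + t)" for e x
  have split: "P e y = P e x * (\<Prod>t\<in>{x<..y}. m*e + t)" if "x \<le> y" for e x y
  proof -
    have "{1..y} = {1..x} \<union> {x<..y}" "{1..x} \<inter> {x<..y} = {}" using that by auto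
    then show ?thesis unfolding P_def by (simp add: prod.union_disjoint)
  qed
  have P_choose: "P e x = ((m*e + x) choose x) * fact x" for e x
    unfolding P_def by (rule choose_mult_fact_eq_prod[symmetric])
  have "P c a * P d b * (fact a' * fact b')
      = (((m*c + a) choose a) * ((m*d + b) choose b)) * (fact a * fact b * fact a' * fact b')"
    unfolding P_choose by (simp only: mult_ac)
  also have "\<dots> = (((m*c + a') choose a') * ((m*d + b') choose b')) * (fact a * fact b * fact a' * fact b')"
    by (simp only: eq)
  also have "\<dots> = P c a' * P d b' * (fact a * fact b)"
    unfolding P_choose by (simp only: mult_ac)
  finally have "P c a * P d b * (fact a' * fact b') = P c a' * P d b' * (fact a * fact b)" .
  then have "(P c a * P d b') * (fact a' * fact b' * (\<Prod>t\<in>{b'<..b}. m*d + t))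
      = (P c a * P d b') * (fact a * fact b * (\<Prod>t\<in>{a<..a'}. m*c + t))"
    unfolding split[OF le(1), of c] split[OF le(2), of d] by (simp add: ac_simps)
  moreover have "P c a * P d b' \<noteq> 0" unfolding P_def by simp
  ultimately show ?thesis by simp
qed

lemma poly_eq_if_eq_on_nat:
  fixes p q :: "real poly"
  assumes "\<And>m::nat. poly p (real m) = poly q (real m)"
  shows "p = q"
proof (rule ccontr)
  assume "p \<noteq> q"
  then have "finite {x. poly (p - q) x = 0}" by (intro poly_roots_finite) simp
  moreover have "range real \<subseteq> {x. poly (p - q) x = 0}" using assms by auto
  ultimately show False
    using finite_subset finite_imageD[of real UNIV] inj_of_nat by auto
qed

lemma matching_linear_roots:
  fixes I J :: "nat set" and \<alpha> \<beta> c d q s :: nat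
  assumes "finite I" "finite J" "0 < \<alpha>" "0 < \<beta>" "0 < q"
    and eq: "\<And>m. \<alpha> * (\<Prod>t\<in>I. m*c + t) = \<beta> * (\<Prod>t\<in>J. m*d + t)"
  shows "(\<exists>t\<in>I. t * q = c * s) \<longleftrightarrow> (\<exists>t\<in>J. t * q = d * s)"
proof -
  define U :: "real poly" where "U = smult (real \<alpha>) (\<Prod>t\<in>I. [:real t, real c:])"
  define W :: "real poly" where "W = smult (real \<beta>) (\<Prod>t\<in>J. [:real t, real d:])"
  have poly_U: "poly U y = real \<alpha> * (\<Prod>t\<in>I. real t + real c * y)" for y
    by (simp add: U_def poly_prod mult.commute)
  have poly_W: "poly W y = real \<beta> * (\<Prod>t\<in>J. real t + real d * y)" for y
    by (simp add: W_def poly_prod mult.commute)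
  have "U = W"
  proof (rule poly_eq_if_eq_on_nat)
    fix m :: nat
    have "real (\<alpha> * (\<Prod>t\<in>I. m*c + t)) = real (\<beta> * (\<Prod>t\<in>J. m*d + t))" using eq by simp
    then show "poly U (real m) = poly W (real m)" unfolding poly_U poly_W by (simp add: ac_simps)
  qed
  then have "poly U (- real s / real q) = 0 \<longleftrightarrow> poly W (- real s / real q) = 0" by simp
  moreover have "real t + real e * (- real s / real q) = 0 \<longleftrightarrow> t * q = e * s" for t e
    using assms(5) by (simp add: field_simps) (metis of_nat_eq_iff of_nat_mult)
  ultimately show ?thesis
    unfolding poly_U poly_W using assms(1-4) by simp
qed

lemma eq_cases_of_cross_products:
  fixes a a' c d K :: nat
  assumes "c + d = K" "a < a'" "a' \<le> K" "0 < c" "0 < d"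
    and E1: "(a + 1) * d = (K - a' + 1) * c" and E2: "a' * d = (K - a) * c"
  shows "c = d \<and> a + a' = K"
proof -
  define e where "e = a' - a - 1"
  have "a' = (a + 1) + e" "K - a = (K - a' + 1) + e" using assms(2,3) unfolding e_def by auto
  then have "(a + 1) * d + e * d = (K - a' + 1) * c + e * c"
    using E2 by (metis add_mult_distrib)
  then have "e * d = e * c" using E1 by simp
  show ?thesis
  proof (cases "e = 0")
    case False
    then have "c = d" using \<open>e * d = e * c\<close> by simp
    then show ?thesis using E1 assms by simp
  next
    case True
    then have "a' = a + 1" using assms(2) unfolding e_def by simp
    define r where "r = K - a"
    have "d * (K + 1) = (a + 1) * d + r * d" using assms(2,3) unfolding r_def by (simp add: algebra_simps)
    also have "\<dots> = r * (c + d)" using E2 \<open>a' = a + 1\<close> unfolding r_def by (simp add: algebra_simps)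
    finally have "d * K + d = K * r" using assms(1) by (simp add: algebra_simps)
    then have "K dvd d" by (metis dvd_add_right_iff dvd_triv_left dvd_triv_right)
    then show ?thesis using assms(1,4,5) by (auto dest: dvd_imp_le)
  qed
qed

(* The hypothesis says that {t / c. t \<in> I} = {t / d. t \<in> J}; compare least and greatest elements. *)
lemma extreme_roots_match:
  fixes a a' c d K :: nat
  defines "I \<equiv> {a<..a'}" and "J \<equiv> {K - a'<..K - a}"
  assumes cd: "c + d = K" and less: "a < a'" "a' \<le> K"
    and roots: "\<And>q s. 0 < q \<Longrightarrow> (\<exists>t\<in>I. t * q = c * s) \<longleftrightarrow> (\<exists>t\<in>J. t * q = d * s)"
  shows "0 < c" "0 < d" "(a + 1) * d = (K - a' + 1) * c" "a' * d = (K - a) * c"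
proof -
  show "0 < c"
  proof (rule ccontr)
    assume "\<not> 0 < c"
    then have "0 < d" "\<exists>t\<in>I. t * d = c * (K - a)" using roots[of d "K - a"] cd less by (auto simp: J_def)
    then show False using \<open>\<not> 0 < c\<close> by (auto simp: I_def)
  qed
  show "0 < d"
  proof (rule ccontr)
    assume "\<not> 0 < d"
    then have "\<exists>t\<in>J. t * c = d * a'" using roots[of c a'] \<open>0 < c\<close> less by (auto simp: I_def)
    then show False using \<open>\<not> 0 < d\<close> \<open>0 < c\<close> less by (auto simp: J_def)
  qed
  have I_to_J: "\<exists>t\<in>J. t * c = d * s" if "s \<in> I" for s
    using roots[OF \<open>0 < c\<close>, of s] that by auto
  have J_to_I: "\<exists>t\<in>I. t * d = c * s" if "s \<in> J" for s
    using roots[OF \<open>0 < d\<close>, of s] that by auto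
  have ends: "a + 1 \<in> I" "a' \<in> I" "K - a' + 1 \<in> J" "K - a \<in> J"
    using less unfolding I_def J_def by auto
  have "(K - a' + 1) * c \<le> d * (a + 1)"
  proof -
    obtain t where "t \<in> J" "t * c = d * (a + 1)" using I_to_J[OF ends(1)] by blast
    then show ?thesis using mult_le_mono1[of "K - a' + 1" t c] by (auto simp: J_def)
  qed
  moreover have "(a + 1) * d \<le> c * (K - a' + 1)"
  proof -
    obtain t where "t \<in> I" "t * d = c * (K - a' + 1)" using J_to_I[OF ends(3)] by blast
    then show ?thesis using mult_le_mono1[of "a + 1" t d] by (auto simp: I_def)
  qed
  moreover have "a' * d \<le> (K - a) * c"
  proof -
    obtain t where "t \<in> J" "t * c = d * a'" using I_to_J[OF ends(2)] by blast
    then show ?thesis using mult_le_mono1[of t "K - a" c] by (auto simp: J_def mult.commute)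
  qed
  moreover have "(K - a) * c \<le> a' * d"
  proof -
    obtain t where "t \<in> I" "t * d = c * (K - a)" using J_to_I[OF ends(4)] by blast
    then show ?thesis using mult_le_mono1[of t a' d] by (auto simp: I_def mult.commute)
  qed
  ultimately show "(a + 1) * d = (K - a' + 1) * c" "a' * d = (K - a) * c"
    by (simp_all add: mult.commute)
qed

lemma binomial_products_eq_imp_less:
  fixes a a' c d K :: nat
  assumes cd: "c + d = K" and less: "a < a'" "a' \<le> K"
    and eq: "\<And>m. ((m*c + a) choose a) * ((m*d + (K - a)) choose (K - a))
              = ((m*c + a') choose a') * ((m*d + (K - a')) choose (K - a'))"
  shows "c = d \<and> a + a' = K"
proof -
  have "(\<exists>t\<in>{a<..a'}. t * q = c * s) \<longleftrightarrow> (\<exists>t\<in>{K - a'<..K - a}. t * q = d * s)" if "0 < q" for q s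
  proof (rule matching_linear_roots)
    show "fact a * fact (K - a) * (\<Prod>t\<in>{a<..a'}. m*c + t) = fact a' * fact (K - a') * (\<Prod>t\<in>{K - a'<..K - a}. m*d + t)"
      for m using binomial_products_cancel[OF _ _ eq[of m]] less by simp
  qed (use that in simp_all)
  note extremes = extreme_roots_match[OF cd less this]
  show ?thesis by (rule eq_cases_of_cross_products[OF cd less extremes])
qed

lemma binomial_products_eq_imp:
  fixes a a' c d K :: nat
  assumes "c + d = K" "a \<le> K" "a' \<le> K"
    and "\<And>m. ((m*c + a) choose a) * ((m*d + (K - a)) choose (K - a))
              = ((m*c + a') choose a') * ((m*d + (K - a')) choose (K - a'))"
  shows "a = a' \<or> (c = d \<and> a + a' = K)"
  using binomial_products_eq_imp_less[of c d K a a'] binomial_products_eq_imp_less[of c d K a' a] assms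
  by (cases a a' rule: linorder_cases) (simp_all add: add.commute)

lemma prod_choose_partial_sums:
  fixes g :: "nat \<Rightarrow> nat"
  assumes "\<And>j. j < m \<Longrightarrow> g j = c"
  shows "(\<Prod>j<Suc m. (\<Sum>l\<le>j. g l) choose g j) = (\<Prod>j<m. (Suc j * c) choose c) * ((m * c + g m) choose g m)"
proof -
  have partial_sum: "(\<Sum>l\<le>j. g l) = Suc j * c" if "j < m" for j
  proof -
    have "(\<Sum>l\<le>j. g l) = (\<Sum>l\<le>j. c)" using assms that by (intro sum.cong) auto
    then show ?thesis by simp
  qed
  have "(\<Sum>l\<le>m. g l) = (\<Sum>l<m. g l) + g m" by (simp add: lessThan_Suc_atMost[symmetric])
  also have "(\<Sum>l<m. g l) = (\<Sum>l<m. c)" using assms by (intro sum.cong) auto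
  finally have total: "(\<Sum>l\<le>m. g l) = m * c + g m" by simp
  have "(\<Prod>j<m. (\<Sum>l\<le>j. g l) choose g j) = (\<Prod>j<m. (Suc j * c) choose c)"
    using partial_sum assms by (intro prod.cong) auto
  then show ?thesis using total by simp
qed

section \<open>Legs hung below a vertex of a path\<close>

lemma card_instances_supset_eq:
  assumes "super_strongly_cfw_equiv k \<pi> \<pi>'" "rooted_forest n par"
  shows "card {L \<in> labelings n. S \<subseteq> instances n par k \<pi> L} = card {L \<in> labelings n. S \<subseteq> instances n par k \<pi>' L}"
proof -
  have count: "card {L \<in> labelings n. S \<subseteq> instances n par k \<sigma> L}
      = (\<Sum>S'\<in>{S'. S \<subseteq> S' \<and> S' \<subseteq> down_paths n par k}. card {L \<in> labelings n. instances n par k \<sigma> L = S'})"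
    for \<sigma>
  proof -
    have "finite (down_paths n par k)"
      by (rule finite_subset[of _ "{p. set p \<subseteq> {0..<n} \<and> length p = k}"])
        (auto simp: down_paths_def intro: finite_lists_length_eq)
    then have "finite {S'. S \<subseteq> S' \<and> S' \<subseteq> down_paths n par k}"
      by (rule finite_subset[rotated, OF finite_Pow_iff[THEN iffD2]]) auto
    moreover have "finite (labelings n)"
      by (simp add: labelings_eq_labelings_on finite_labelings_on)
    moreover have "{L \<in> labelings n. S \<subseteq> instances n par k \<sigma> L}
        = (\<Union>S'\<in>{S'. S \<subseteq> S' \<and> S' \<subseteq> down_paths n par k}. {L \<in> labelings n. instances n par k \<sigma> L = S'})"
      unfolding instances_def by auto
    ultimately show ?thesis by (simp only:) (rule card_UN_disjoint; auto)
  qed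
  show ?thesis
    unfolding count using assms unfolding super_strongly_cfw_equiv_def by (intro sum.cong) auto
qed

(* On the vertices 0..<k + m * (k - 1): the vertices 0..<k form a path, and the j-th block
   k + j * (k - 1) ..< k + (j + 1) * (k - 1) is a path hung below the vertex i - 1. *)
definition hung_parent :: "nat \<Rightarrow> nat \<Rightarrow> nat \<Rightarrow> nat option" where
  "hung_parent k i v = (if v = 0 then None
     else if k \<le> v \<and> (v - k) mod (k - 1) = 0 then Some (i - 1) else Some (v - 1))"

definition leg :: "nat \<Rightarrow> nat \<Rightarrow> nat \<Rightarrow> nat list" where
  "leg k i j = (i - 1) # [k + j * (k - 1)..<k + Suc j * (k - 1)]"

lemma rooted_forest_hung_parent:
  assumes "i \<le> k"
  shows "rooted_forest n (hung_parent k i)"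
proof -
  have parent_less: "hung_parent k i v = Some u \<Longrightarrow> u < v" for u v
    using assms by (auto simp: hung_parent_def split: if_splits)
  then have "{(u, v). v < n \<and> hung_parent k i v = Some u} \<subseteq> less_than" by auto
  then show ?thesis
    unfolding rooted_forest_def using parent_less
    by (meson less_trans wf_acyclic wf_subset[OF wf_less_than])
qed

lemma spine_in_down_paths: "k \<le> n \<Longrightarrow> [0..<k] \<in> down_paths n (hung_parent k i) k"
  by (auto simp: down_paths_def hung_parent_def)

lemma leg_in_down_paths:
  assumes "2 \<le> k" "i \<le> k" "j < m"
  shows "leg k i j \<in> down_paths (k + m * (k - 1)) (hung_parent k i) k"
  unfolding down_paths_def
proof (intro CollectI conjI allI impI)
  have "Suc j * (k - 1) \<le> m * (k - 1)" using assms(3) by (intro mult_le_mono1) simp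
  then show "set (leg k i j) \<subseteq> {0..<k + m * (k - 1)}" using assms(1,2) by (auto simp: leg_def)
  fix s assume s: "Suc s < k"
  have mod: "(k + j * (k - 1) + s - k) mod (k - 1) = s" using s by simp
  show "hung_parent k i (leg k i j ! Suc s) = Some (leg k i j ! s)"
    using s mod by (cases s) (auto simp: leg_def hung_parent_def nth_Cons')
qed (use assms(1) in \<open>simp add: leg_def\<close>)

lemma set_leg: "2 \<le> k \<Longrightarrow> set (leg k i j) = insert (i - 1) {k + j * (k - 1)..<k + Suc j * (k - 1)}"
  by (simp add: leg_def)

lemma set_leg_Int_spine: "2 \<le> k \<Longrightarrow> set (leg k i j) \<inter> {0..<k} \<subseteq> {i - 1}"
  by (auto simp: set_leg)

lemma set_leg_Int:
  assumes "2 \<le> k" "j \<noteq> j'"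
  shows "set (leg k i j) \<inter> set (leg k i j') \<subseteq> {i - 1}"
proof -
  have "Suc (min j j') * (k - 1) \<le> max j j' * (k - 1)" using assms(2) by (intro mult_le_mono1) auto
  then show ?thesis using assms by (auto simp: set_leg min_def max_def split: if_splits)
qed

lemma UN_consecutive_intervals: "(\<Union>j<m. {a + j * K..<a + Suc j * K}) = {a..<a + m * K :: nat}"
  by (induction m) (auto simp: lessThan_Suc ivl_disj_un_two(3)[symmetric] add.assoc)

lemma card_labelings_hung_instances:
  assumes \<pi>: "pattern k \<pi>" and k: "2 \<le> k" and i: "i \<in> {1..k}"
  shows "card {L \<in> labelings (k + m * (k - 1)).
            insert [0..<k] (leg k i ` {..<m}) \<subseteq> instances (k + m * (k - 1)) (hung_parent k i) k \<pi> L}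
       = ((\<Prod>j<m. (Suc j * (\<pi> 1 - 1)) choose (\<pi> 1 - 1)) * ((m * (\<pi> 1 - 1) + (\<pi> i - 1)) choose (\<pi> i - 1)))
         * ((\<Prod>j<m. (Suc j * (k - \<pi> 1)) choose (k - \<pi> 1)) * ((m * (k - \<pi> 1) + (k - \<pi> i)) choose (k - \<pi> i)))"
proof -
  define n where "n = k + m * (k - 1)"
  define p where "p j = (if j < m then leg k i j else [0..<k])" for j
  define h where "h j = (if j < m then 0 else i - 1)" for j
  have paths: "\<forall>j<Suc m. distinct (p j) \<and> length (p j) = k \<and> h j < k \<and> p j ! h j = i - 1"
    using i k by (auto simp: p_def h_def leg_def)
  have meet: "\<forall>j<Suc m. \<forall>j'<Suc m. j \<noteq> j' \<longrightarrow> set (p j) \<inter> set (p j') \<subseteq> {i - 1}"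
    using set_leg_Int[OF k] set_leg_Int_spine[OF k] unfolding p_def by (auto simp: Int_commute)
  have "insert (i - 1) (\<Union>j<Suc m. set (p j)) = {0..<k} \<union> (\<Union>j<m. {k + j * (k - 1)..<k + Suc j * (k - 1)})"
    using i k by (auto simp: p_def set_leg lessThan_Suc)
  then have vertices: "insert (i - 1) (\<Union>j<Suc m. set (p j)) = {0..<n}"
    unfolding UN_consecutive_intervals n_def using ivl_disj_un_two(3)[of 0 k "k + m * (k - 1)"] by simp
  have "insert [0..<k] (leg k i ` {..<m}) = p ` {..<Suc m}"
    by (auto simp: p_def lessThan_Suc image_iff)
  moreover have "p j \<in> down_paths n (hung_parent k i) k" if "j < Suc m" for j
    using that spine_in_down_paths[of k n i] leg_in_down_paths[OF k, of i j m] i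
    unfolding p_def n_def by auto
  ultimately have "{L \<in> labelings n. insert [0..<k] (leg k i ` {..<m}) \<subseteq> instances n (hung_parent k i) k \<pi> L}
      = {L \<in> labelings_on (insert (i - 1) (\<Union>j<Suc m. set (p j))). \<forall>j<Suc m. is_instance k \<pi> L (p j)}"
    unfolding vertices labelings_eq_labelings_on instances_def by auto
  moreover note card_labelings_on_star_instances[OF \<pi> paths meet]
  moreover note prod_choose_partial_sums[of m "\<lambda>l. \<pi> (Suc (h l)) - 1" "\<pi> 1 - 1"]
    prod_choose_partial_sums[of m "\<lambda>l. k - \<pi> (Suc (h l))" "k - \<pi> 1"]
  ultimately show ?thesis
    using i unfolding n_def by (simp add: h_def)
qed

lemma super_strongly_cfw_equiv_binomial_products:
  assumes \<pi>: "pattern k \<pi>" and \<pi>': "pattern k \<pi>'" and first: "\<pi> 1 = \<pi>' 1"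
    and equiv: "super_strongly_cfw_equiv k \<pi> \<pi>'" and k: "2 \<le> k" and i: "i \<in> {1..k}"
  shows "((m * (\<pi> 1 - 1) + (\<pi> i - 1)) choose (\<pi> i - 1)) * ((m * (k - \<pi> 1) + (k - \<pi> i)) choose (k - \<pi> i))
       = ((m * (\<pi> 1 - 1) + (\<pi>' i - 1)) choose (\<pi>' i - 1)) * ((m * (k - \<pi> 1) + (k - \<pi>' i)) choose (k - \<pi>' i))"
proof -
  have "card {L \<in> labelings (k + m * (k - 1)).
          insert [0..<k] (leg k i ` {..<m}) \<subseteq> instances (k + m * (k - 1)) (hung_parent k i) k \<pi> L}
      = card {L \<in> labelings (k + m * (k - 1)).
          insert [0..<k] (leg k i ` {..<m}) \<subseteq> instances (k + m * (k - 1)) (hung_parent k i) k \<pi>' L}"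
    using i by (intro card_instances_supset_eq[OF equiv] rooted_forest_hung_parent) simp
  then show ?thesis
    using card_labelings_hung_instances[OF \<pi> k i, of m] card_labelings_hung_instances[OF \<pi>' k i, of m] first
    by (simp add: binomial_eq_0_iff)
qed

lemma super_strongly_cfw_equiv_values:
  assumes \<pi>: "pattern k \<pi>" and \<pi>': "pattern k \<pi>'" and first: "\<pi> 1 = \<pi>' 1"
    and equiv: "super_strongly_cfw_equiv k \<pi> \<pi>'" and i: "i \<in> {1..k}"
  shows "\<pi> i = \<pi>' i \<or> (2 * \<pi> 1 = k + 1 \<and> \<pi> i + \<pi>' i = k + 1)"
proof (cases "2 \<le> k")
  case False
  then have "i = 1" using i by auto
  then show ?thesis using first by simp
next
  case True
  have range: "\<pi> 1 \<in> {1..k}" "\<pi> i \<in> {1..k}" "\<pi>' i \<in> {1..k}"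
    using \<pi> \<pi>' i True unfolding pattern_def bij_betw_def by auto
  have "\<pi> i - 1 = \<pi>' i - 1 \<or> (\<pi> 1 - 1 = k - \<pi> 1 \<and> (\<pi> i - 1) + (\<pi>' i - 1) = k - 1)"
  proof (rule binomial_products_eq_imp)
    fix m
    show "((m * (\<pi> 1 - 1) + (\<pi> i - 1)) choose (\<pi> i - 1)) * ((m * (k - \<pi> 1) + (k - 1 - (\<pi> i - 1))) choose (k - 1 - (\<pi> i - 1)))
        = ((m * (\<pi> 1 - 1) + (\<pi>' i - 1)) choose (\<pi>' i - 1)) * ((m * (k - \<pi> 1) + (k - 1 - (\<pi>' i - 1))) choose (k - 1 - (\<pi>' i - 1)))"
      using super_strongly_cfw_equiv_binomial_products[OF \<pi> \<pi>' first equiv True i, of m] range by simp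
  qed (use range in auto)
  then show ?thesis using range by auto
qed

theorem lemma4p36:
  fixes k :: nat and \<pi> \<pi>' :: "nat \<Rightarrow> nat"
  assumes "pattern k \<pi>" and "pattern k \<pi>'"
    and "\<pi> 1 = \<pi>' 1"
    and "super_strongly_cfw_equiv k \<pi> \<pi>'"
  shows "(\<not> (odd k \<and> 2 * \<pi> 1 = k + 1) \<longrightarrow> (\<forall>i\<in>{1..k}. \<pi> i = \<pi>' i)) \<and>
         (odd k \<and> 2 * \<pi> 1 = k + 1 \<longrightarrow>
            (\<forall>i\<in>{1..k}. \<pi> i = \<pi>' i \<or> \<pi> i + \<pi>' i = k + 1))"
proof -
  have "2 * \<pi> 1 = k + 1 \<Longrightarrow> odd k" by presburger
  then show ?thesis using super_strongly_cfw_equiv_values[OF assms] by blast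
qed

end
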